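(* Let $W$ be an irreducible euclidean Coxeter group not of type $\widetilde A_n$ and $\sigma$ a chamber of its Coxeter complex with closest points $x_0,x_1$, bipartite line $L$ and bipartite involutions $w_0,w_1$. Then for $i\in\{0,1\}$, $w_i$ stabilizes $L$ and restricts to a reflection of $L$ fixing only the point $x_i$.
   Context: $W$ acts on a euclidean space $E$, generated by reflections in the facets of a euclidean simplex with dihedral angles submultiples of $\pi$, properly and cocompactly; chambers are images of the simplex. The diagram $\Gamma$ (a tree) has a unique bipartition, giving a partition $S_0\sqcup S_1$ of the reflections in the facets of $\sigma$ into pairwise-commuting sets; the bipartite involution $w_j$ is the product of the reflections in $S_j$. $F_j$ is the face of $\sigma$ cut out by the hyperplanes of the reflections in $S_j$, $B_j$ its affine hull; $x_0\in B_0$, $x_1\in B_1$ are the unique points realizing the distance between $B_0$ and $B_1$, and $L$ is the line through them. *)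

theory Defs
  imports "HOL-Analysis.Analysis"
begin

text \<open>A euclidean simplex in E = 'a (with DIM('a) = N) is given by N+1 unit inward
  normals u i and offsets c i, i in {0..N}: sigma = {x. for all i, u i \<bullet> x \<ge> c i}.\<close>

definition simplex_of :: "nat \<Rightarrow> (nat \<Rightarrow> 'a::euclidean_space) \<Rightarrow> (nat \<Rightarrow> real) \<Rightarrow> 'a set" where
  "simplex_of N u c = {x. \<forall>i\<in>{0..N}. c i \<le> u i \<bullet> x}"

definition hreflect :: "'a::euclidean_space \<Rightarrow> real \<Rightarrow> 'a \<Rightarrow> 'a" where
  "hreflect v d x = x - (2 * (v \<bullet> x - d) / (v \<bullet> v)) *\<^sub>R v"

text \<open>Dihedral angles are submultiples of pi: the angle between facets i and j is
  pi/m (m \<ge> 2 an integer), i.e. u i \<bullet> u j = - cos(pi/m); parallel facets (m = infinity,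
  angle 0) give u i \<bullet> u j = -1.\<close>
definition coxeter_angles :: "nat \<Rightarrow> (nat \<Rightarrow> 'a::euclidean_space) \<Rightarrow> bool" where
  "coxeter_angles N u \<longleftrightarrow> (\<forall>i\<in>{0..N}. \<forall>j\<in>{0..N}. i \<noteq> j \<longrightarrow>
      ((\<exists>m::nat. m \<ge> 2 \<and> u i \<bullet> u j = - cos (pi / real m)) \<or> u i \<bullet> u j = -1))"

definition coxeter_simplex :: "nat \<Rightarrow> (nat \<Rightarrow> 'a::euclidean_space) \<Rightarrow> (nat \<Rightarrow> real) \<Rightarrow> bool" where
  "coxeter_simplex N u c \<longleftrightarrow> (\<forall>i\<in>{0..N}. norm (u i) = 1)
     \<and> bounded (simplex_of N u c) \<and> interior (simplex_of N u c) \<noteq> {}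
     \<and> coxeter_angles N u"

text \<open>Coxeter diagram: vertices {0..N}, edge i--j iff m_ij \<ge> 3, i.e. u i \<bullet> u j \<noteq> 0.\<close>
definition diagram_edges :: "nat \<Rightarrow> (nat \<Rightarrow> 'a::euclidean_space) \<Rightarrow> (nat \<times> nat) set" where
  "diagram_edges N u = {(i,j). i \<in> {0..N} \<and> j \<in> {0..N} \<and> i \<noteq> j \<and> u i \<bullet> u j \<noteq> 0}"

definition irreducible_diagram :: "nat \<Rightarrow> (nat \<Rightarrow> 'a::euclidean_space) \<Rightarrow> bool" where
  "irreducible_diagram N u \<longleftrightarrow> (\<forall>i\<in>{0..N}. \<forall>j\<in>{0..N}. (i,j) \<in> (diagram_edges N u)\<^sup>*)"

text \<open>Type A-tilde_n: for N = 1 the (only) Coxeter matrix m_01 = infinity; for N \<ge> 2 the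
  Coxeter matrix is, after relabelling, that of an (N+1)-cycle with all labels 3.\<close>
definition type_A_tilde :: "nat \<Rightarrow> (nat \<Rightarrow> 'a::euclidean_space) \<Rightarrow> bool" where
  "type_A_tilde N u \<longleftrightarrow> (N = 1 \<and> u 0 \<bullet> u 1 = -1) \<or>
     (N \<ge> 2 \<and> (\<exists>f. bij_betw f {0..N} {0..N} \<and>
        (\<forall>k\<in>{0..N}. \<forall>l\<in>{0..N}. k \<noteq> l \<longrightarrow>
           u (f k) \<bullet> u (f l) = (if l = (k + 1) mod (N + 1) \<or> k = (l + 1) mod (N + 1)
                                 then - cos (pi / 3) else 0))))"

text \<open>Product of the reflections in the facets indexed by S (they pairwise commute, so the
  order is irrelevant; we use increasing order).\<close>
definition bip_inv :: "(nat \<Rightarrow> 'a::euclidean_space) \<Rightarrow> (nat \<Rightarrow> real) \<Rightarrow> nat set \<Rightarrow> 'a \<Rightarrow> 'a" where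
  "bip_inv u c S = foldr (\<lambda>i f. hreflect (u i) (c i) \<circ> f) (sorted_list_of_set S) id"

definition face_cut :: "nat \<Rightarrow> (nat \<Rightarrow> 'a::euclidean_space) \<Rightarrow> (nat \<Rightarrow> real) \<Rightarrow> nat set \<Rightarrow> 'a set" where
  "face_cut N u c S = simplex_of N u c \<inter> {x. \<forall>i\<in>S. u i \<bullet> x = c i}"

end

theory Submission
  imports Defs
begin

text \<open>Reflections in two facets of the simplex commute only if their normals are orthogonal, so
  \<open>w\<^sub>j\<close> is \<open>y \<mapsto> y - (\<Sum>i\<in>S\<^sub>j. 2 (u\<^sub>i \<bullet> y - c\<^sub>i) u\<^sub>i)\<close>. A point of the relative interior of \<open>F\<^sub>j\<close> can be
  moved a little in every direction orthogonal to the normals \<open>u\<^sub>i\<close>, \<open>i \<in> S\<^sub>j\<close>, so these directions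
  lie in \<open>B\<^sub>j\<close>; minimality of \<open>dist x\<^sub>0 x\<^sub>1\<close> then puts \<open>x\<^sub>1 - x\<^sub>0\<close> in the span of those normals.
  Hence \<open>w\<^sub>j\<close> fixes \<open>x\<^sub>j \<in> B\<^sub>j\<close> and negates \<open>x\<^sub>1 - x\<^sub>0\<close>: on \<open>L\<close> it is the point reflection in \<open>x\<^sub>j\<close>.\<close>

lemma hreflect_unit_normal:
  "norm v = 1 \<Longrightarrow> hreflect v d x = x - (2 * (v \<bullet> x - d)) *\<^sub>R v"
  unfolding hreflect_def by (simp add: power2_norm_eq_inner[symmetric])

text \<open>Evaluate both composites at a point of the first hyperplane off the second: they differ
  by a multiple of \<open>(a \<bullet> b) *\<^sub>R a\<close>.\<close>
lemma hreflect_commute_imp_orthogonal: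
  assumes a: "norm a = 1" and b: "norm b = 1"
    and comm: "hreflect a d \<circ> hreflect b e = hreflect b e \<circ> hreflect a d"
    and p: "a \<bullet> p = d" "b \<bullet> p \<noteq> e"
  shows "a \<bullet> b = 0"
proof -
  define \<beta> where "\<beta> = b \<bullet> p - e"
  have "(hreflect a d \<circ> hreflect b e) p = p - (2 * \<beta>) *\<^sub>R b + (4 * \<beta> * (a \<bullet> b)) *\<^sub>R a"
    using a b p by (simp add: hreflect_unit_normal \<beta>_def inner_diff_right algebra_simps)
  moreover have "(hreflect b e \<circ> hreflect a d) p = p - (2 * \<beta>) *\<^sub>R b"
    using a b p by (simp add: hreflect_unit_normal \<beta>_def)
  ultimately have "(4 * \<beta> * (a \<bullet> b)) *\<^sub>R a = 0"
    using comm by simp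
  moreover have "\<beta> \<noteq> 0" "a \<noteq> 0" using p a by (auto simp: \<beta>_def)
  ultimately show ?thesis by simp
qed

lemma foldr_hreflect_orthonormal:
  assumes "distinct xs" "\<forall>i\<in>set xs. norm (u i) = 1"
    "\<forall>i\<in>set xs. \<forall>k\<in>set xs. i \<noteq> k \<longrightarrow> u i \<bullet> u k = 0"
  shows "foldr (\<lambda>i f. hreflect (u i) (c i) \<circ> f) xs id y
      = y - (\<Sum>i\<in>set xs. (2 * (u i \<bullet> y - c i)) *\<^sub>R u i)"
  using assms
proof (induction xs)
  case Nil
  then show ?case by simp
next
  case (Cons a xs)
  define z where "z = y - (\<Sum>i\<in>set xs. (2 * (u i \<bullet> y - c i)) *\<^sub>R u i)"
  have IH: "foldr (\<lambda>i f. hreflect (u i) (c i) \<circ> f) xs id y = z"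
    unfolding z_def by (rule Cons.IH) (use Cons.prems in auto)
  have a_notin: "a \<notin> set xs" using Cons.prems(1) by simp
  have "u a \<bullet> (\<Sum>i\<in>set xs. (2 * (u i \<bullet> y - c i)) *\<^sub>R u i) = 0"
    unfolding inner_sum_right using Cons.prems(3) a_notin by (intro sum.neutral) auto
  then have "u a \<bullet> z = u a \<bullet> y" unfolding z_def by (simp add: inner_diff_right)
  then have "foldr (\<lambda>i f. hreflect (u i) (c i) \<circ> f) (a # xs) id y
      = z - (2 * (u a \<bullet> y - c a)) *\<^sub>R u a"
    using IH Cons.prems(2) by (simp add: hreflect_unit_normal)
  also have "\<dots> = y - (\<Sum>i\<in>set (a # xs). (2 * (u i \<bullet> y - c i)) *\<^sub>R u i)"
    unfolding z_def using a_notin by (simp add: algebra_simps)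
  finally show ?case .
qed

lemma bip_inv_orthonormal:
  assumes "finite S" "\<forall>i\<in>S. norm (u i) = 1" "\<forall>i\<in>S. \<forall>k\<in>S. i \<noteq> k \<longrightarrow> u i \<bullet> u k = 0"
  shows "bip_inv u c S y = y - (\<Sum>i\<in>S. (2 * (u i \<bullet> y - c i)) *\<^sub>R u i)"
  using foldr_hreflect_orthonormal[of "sorted_list_of_set S" u c y] assms
  by (simp add: bip_inv_def)

lemma orthonormal_expansion_if_perp:
  assumes fin: "finite S" and unit: "\<forall>i\<in>S. norm (u i) = 1"
    and orth: "\<forall>i\<in>S. \<forall>k\<in>S. i \<noteq> k \<longrightarrow> u i \<bullet> u k = 0"
    and perp: "\<forall>z. (\<forall>i\<in>S. u i \<bullet> z = 0) \<longrightarrow> v \<bullet> z = 0"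
  shows "v = (\<Sum>i\<in>S. (u i \<bullet> v) *\<^sub>R u i)"
proof -
  define r where "r = v - (\<Sum>i\<in>S. (u i \<bullet> v) *\<^sub>R u i)"
  have ur: "u k \<bullet> r = 0" if k: "k \<in> S" for k
  proof -
    have "u k \<bullet> (\<Sum>i\<in>S. (u i \<bullet> v) *\<^sub>R u i) = (\<Sum>i\<in>S. if i = k then u k \<bullet> v else 0)"
      unfolding inner_sum_right
      by (rule sum.cong) (use orth k unit in \<open>auto simp: power2_norm_eq_inner[symmetric] inner_commute\<close>)
    also have "\<dots> = u k \<bullet> v" using k fin by simp
    finally show ?thesis unfolding r_def by (simp add: inner_diff_right)
  qed
  have "r \<bullet> r = v \<bullet> r - (\<Sum>i\<in>S. (u i \<bullet> v) *\<^sub>R u i) \<bullet> r"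
    unfolding r_def by (simp add: inner_diff_left)
  also have "\<dots> = 0"
    using perp ur by (simp add: inner_sum_left)
  finally show ?thesis unfolding r_def by simp
qed

lemma bip_inv_point_reflection:
  assumes "finite S" "\<forall>i\<in>S. norm (u i) = 1" "\<forall>i\<in>S. \<forall>k\<in>S. i \<noteq> k \<longrightarrow> u i \<bullet> u k = 0"
    and p: "\<forall>i\<in>S. u i \<bullet> p = c i"
    and perp: "\<forall>z. (\<forall>i\<in>S. u i \<bullet> z = 0) \<longrightarrow> v \<bullet> z = 0"
  shows "bip_inv u c S (p + s *\<^sub>R v) = p - s *\<^sub>R v"
proof -
  have "(\<Sum>i\<in>S. (2 * (u i \<bullet> (p + s *\<^sub>R v) - c i)) *\<^sub>R u i) = (2 * s) *\<^sub>R (\<Sum>i\<in>S. (u i \<bullet> v) *\<^sub>R u i)"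
    unfolding scaleR_sum_right by (rule sum.cong) (use p in \<open>auto simp: inner_add_right\<close>)
  also have "\<dots> = (2 * s) *\<^sub>R v"
    using orthonormal_expansion_if_perp[OF assms(1-3) perp] by simp
  finally have "bip_inv u c S (p + s *\<^sub>R v) = (p + s *\<^sub>R v) - (s + s) *\<^sub>R v"
    by (simp only: bip_inv_orthonormal[OF assms(1-3)] mult_2)
  then show ?thesis by (simp only: scaleR_add_left) simp
qed

lemma nearest_point_perp:
  fixes p x z :: "'a::real_inner"
  assumes line: "\<forall>t. x + t *\<^sub>R z \<in> A" and nearest: "\<forall>a\<in>A. dist p x \<le> dist p a"
  shows "(p - x) \<bullet> z = 0"
proof (cases "z = 0")
  case False
  define w where "w = p - x"
  define t where "t = (w \<bullet> z) / (z \<bullet> z)"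
  have zz: "z \<bullet> z > 0" using False by simp
  have "norm w \<le> norm (w - t *\<^sub>R z)"
    using nearest line[rule_format, of t] by (simp add: w_def dist_norm algebra_simps)
  then have "norm w ^ 2 \<le> norm (w - t *\<^sub>R z) ^ 2"
    by (simp add: power_mono)
  then have "0 \<le> t * t * (z \<bullet> z) - 2 * t * (w \<bullet> z)"
    by (simp add: power2_norm_eq_inner inner_diff_left inner_diff_right inner_commute algebra_simps)
  also have "\<dots> = - (w \<bullet> z)\<^sup>2 / (z \<bullet> z)"
    using zz by (simp add: t_def field_simps power2_eq_square)
  finally have "(w \<bullet> z)\<^sup>2 \<le> 0"
    using zz by (simp add: divide_le_0_iff)
  then show ?thesis unfolding w_def by simp
qed simp

lemma closest_points_perp:
  fixes x0 x1 z :: "'a::real_inner"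
  assumes "\<forall>a\<in>A. \<forall>b\<in>B. dist x0 x1 \<le> dist a b" "x0 \<in> A" "x1 \<in> B"
  shows "(\<forall>t. x0 + t *\<^sub>R z \<in> A) \<Longrightarrow> (x1 - x0) \<bullet> z = 0"
    and "(\<forall>t. x1 + t *\<^sub>R z \<in> B) \<Longrightarrow> (x1 - x0) \<bullet> z = 0"
proof -
  show "(x1 - x0) \<bullet> z = 0" if "\<forall>t. x0 + t *\<^sub>R z \<in> A"
    using nearest_point_perp[OF that] assms by (simp add: dist_commute)
  show "(x1 - x0) \<bullet> z = 0" if "\<forall>t. x1 + t *\<^sub>R z \<in> B"
    using nearest_point_perp[OF that, of x0] assms by (simp add: inner_diff_left)
qed

lemma interior_simplex_of_strict:
  assumes "p \<in> interior (simplex_of N u c)" "i \<in> {0..N}" "norm (u i) = 1"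
  shows "c i < u i \<bullet> p"
proof -
  obtain e where e: "e > 0" "ball p e \<subseteq> simplex_of N u c"
    using assms(1) mem_interior by blast
  have "p - (e/2) *\<^sub>R u i \<in> ball p e" using e assms(3) by (simp add: dist_norm)
  then have "c i \<le> u i \<bullet> (p - (e/2) *\<^sub>R u i)"
    using e assms(2) unfolding simplex_of_def by blast
  also have "\<dots> = u i \<bullet> p - e/2"
    using assms(3) by (simp add: inner_diff_right power2_norm_eq_inner[symmetric])
  finally show ?thesis using e by linarith
qed

lemma simplex_of_unbounded_direction:
  assumes "p \<in> simplex_of N u c" "w \<noteq> 0" "\<forall>i\<in>{0..N}. 0 \<le> u i \<bullet> w"
  shows "\<not> bounded (simplex_of N u c)"
proof
  assume "bounded (simplex_of N u c)"
  then obtain B where B: "\<forall>x\<in>simplex_of N u c. norm x \<le> B" by (auto simp: bounded_iff)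
  have nw: "norm w > 0" using assms(2) by simp
  define t where "t = (B + norm p + 1) / norm w"
  have t0: "t \<ge> 0"
    using B assms(1) nw norm_ge_zero[of p] unfolding t_def by (smt (verit) divide_nonneg_pos)
  have "p + t *\<^sub>R w \<in> simplex_of N u c"
    using assms(1,3) t0 unfolding simplex_of_def by (auto simp: inner_add_right add_increasing2)
  then have "norm (p + t *\<^sub>R w) \<le> B" using B by blast
  moreover have "t * norm w - norm p \<le> norm (p + t *\<^sub>R w)"
    using norm_triangle_ineq2[of "t *\<^sub>R w" "-p"] t0 by (simp add: algebra_simps)
  moreover have "t * norm w = B + norm p + 1" unfolding t_def using nw by simp
  ultimately show False by linarith
qed

lemma bounded_simplex_of_perp_normals_zero:
  assumes "bounded (simplex_of N u c)" "simplex_of N u c \<noteq> {}"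
    "k \<in> {0..N}" "\<forall>i\<in>{0..N}-{k}. u i \<bullet> w = 0"
  shows "w = 0"
proof (rule ccontr)
  assume w: "w \<noteq> 0"
  obtain p where p: "p \<in> simplex_of N u c" using assms(2) by blast
  obtain w' where w': "w' = w \<or> w' = -w" "0 \<le> u k \<bullet> w'"
    by (cases "0 \<le> u k \<bullet> w") (auto intro: that[of w] that[of "-w"])
  have "0 \<le> u i \<bullet> w'" if "i \<in> {0..N}" for i
    by (cases "i = k") (use w' assms(4) that in auto)
  moreover have "w' \<noteq> 0" using w w' by auto
  ultimately show False
    using simplex_of_unbounded_direction[OF p] assms(1) by blast
qed

lemma sum_Basis_bij_inner:
  assumes "bij_betw \<pi> I Basis" "j \<in> I" "finite I"
  shows "(\<Sum>i\<in>I. a i *\<^sub>R \<pi> i) \<bullet> (\<pi> j :: 'a::euclidean_space) = a j"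
proof -
  have "(\<Sum>i\<in>I. a i *\<^sub>R \<pi> i) \<bullet> \<pi> j = (\<Sum>i\<in>I. if i = j then a i else 0)"
    unfolding inner_sum_left
  proof (rule sum.cong)
    fix i assume i: "i \<in> I"
    have "\<pi> i \<in> Basis" "\<pi> j \<in> Basis" using assms i by (auto simp: bij_betw_def)
    moreover have "\<pi> i = \<pi> j \<longleftrightarrow> i = j"
      using assms(1,2) i by (auto simp: bij_betw_def inj_on_def)
    ultimately show "a i *\<^sub>R \<pi> i \<bullet> \<pi> j = (if i = j then a i else 0)" by (auto simp: inner_Basis)
  qed simp
  also have "\<dots> = a j" using assms by simp
  finally show ?thesis .
qed

text \<open>With \<open>DIM('a)\<close> normals, the map \<open>x \<mapsto> (u i \<bullet> x)\<^sub>i\<close>, read in coordinates via a bijection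
  of the index set with \<open>Basis\<close>, is an injective endomorphism, hence surjective.\<close>
lemma inner_system_solvable:
  fixes u :: "'i \<Rightarrow> 'a::euclidean_space"
  assumes fin: "finite I" and card: "card I = DIM('a)"
    and nondeg: "\<forall>w. (\<forall>i\<in>I. u i \<bullet> w = 0) \<longrightarrow> w = 0"
  shows "\<exists>v. \<forall>i\<in>I. u i \<bullet> v = c i"
proof -
  obtain \<pi> where pi: "bij_betw \<pi> I (Basis::'a set)"
    using finite_same_card_bij[of I "Basis::'a set"] fin card by auto
  define g where "g x = (\<Sum>i\<in>I. (u i \<bullet> x) *\<^sub>R \<pi> i)" for x :: 'a
  have lin: "linear g"
    by (rule linearI) (simp_all add: g_def inner_add_right scaleR_add_left sum.distrib scaleR_sum_right)
  have g_coord: "g x \<bullet> \<pi> j = u j \<bullet> x" if "j \<in> I" for x j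
    unfolding g_def using sum_Basis_bij_inner[OF pi that fin] .
  have "inj g"
    unfolding linear_injective_0[OF lin] using nondeg g_coord by (metis inner_zero_left)
  then obtain v where v: "g v = (\<Sum>i\<in>I. c i *\<^sub>R \<pi> i)"
    using lin eucl.linear_inj_imp_surj by (metis surjD)
  have "u i \<bullet> v = c i" if i: "i \<in> I" for i
    using g_coord[OF i, of v] sum_Basis_bij_inner[OF pi i fin, of c] by (simp add: v)
  then show ?thesis by blast
qed

lemma simplex_of_vertex:
  assumes N: "N = DIM('a::euclidean_space)" and unit: "\<forall>i\<in>{0..N}. norm (u i) = 1"
    and bnd: "bounded (simplex_of N u c)" and p: "p \<in> interior (simplex_of N u c)"
    and k: "k \<in> {0..N}"
  shows "\<exists>v::'a. (\<forall>i\<in>{0..N}-{k}. u i \<bullet> v = c i) \<and> c k < u k \<bullet> v"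
proof -
  have "simplex_of N u c \<noteq> {}" using p interior_subset by blast
  then obtain v :: 'a where v: "\<forall>i\<in>{0..N}-{k}. u i \<bullet> v = c i"
    using inner_system_solvable[of "{0..N}-{k}"] bounded_simplex_of_perp_normals_zero[OF bnd _ k]
      k N by fastforce
  have "c k < u k \<bullet> v"
  proof (rule ccontr)
    assume "\<not> c k < u k \<bullet> v"
    then have "\<forall>i\<in>{0..N}. 0 < u i \<bullet> (p - v)"
      using v interior_simplex_of_strict[OF p] unit by (force simp: inner_diff_right)
    moreover have "p \<in> simplex_of N u c" using p interior_subset by blast
    ultimately show False
      using simplex_of_unbounded_direction[of p N u c "p - v"] bnd k by fastforce
  qed
  with v show ?thesis by blast
qed

text \<open>Take the barycentre of the vertices opposite the facets in \<open>T\<close>.\<close>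
lemma simplex_of_relative_interior_point:
  assumes N: "N = DIM('a::euclidean_space)" and unit: "\<forall>i\<in>{0..N}. norm (u i) = 1"
    and bnd: "bounded (simplex_of N u c)" and int: "interior (simplex_of N u c) \<noteq> {}"
    and T: "T \<subseteq> {0..N}" "T \<noteq> {}"
  shows "\<exists>q::'a. (\<forall>i\<in>{0..N}-T. u i \<bullet> q = c i) \<and> (\<forall>i\<in>T. c i < u i \<bullet> q)"
proof -
  obtain p where p: "p \<in> interior (simplex_of N u c)" using int by blast
  obtain vx :: "nat \<Rightarrow> 'a" where
    vx: "\<And>k. k \<in> {0..N} \<Longrightarrow> (\<forall>i\<in>{0..N}-{k}. u i \<bullet> vx k = c i) \<and> c k < u k \<bullet> vx k"
    using simplex_of_vertex[OF N unit bnd p] by metis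
  have finT: "finite T" using T finite_subset by blast
  have cT: "real (card T) > 0" using T finT by (simp add: card_gt_0_iff)
  define q where "q = (1 / real (card T)) *\<^sub>R (\<Sum>k\<in>T. vx k)"
  have uq: "real (card T) * (u i \<bullet> q) = (\<Sum>k\<in>T. u i \<bullet> vx k)" for i
    using cT unfolding q_def by (simp add: inner_sum_right)
  have "u i \<bullet> q = c i" if i: "i \<in> {0..N}-T" for i
  proof -
    have "(\<Sum>k\<in>T. u i \<bullet> vx k) = real (card T) * c i"
    proof (rule trans[OF sum.cong[OF refl]])
      show "u i \<bullet> vx k = c i" if "k \<in> T" for k using vx[of k] that T i by blast
    qed simp
    then show ?thesis using uq[of i] cT by simp
  qed
  moreover have "c i < u i \<bullet> q" if i: "i \<in> T" for i
  proof -
    have "c i \<le> u i \<bullet> vx k" if "k \<in> T" for k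
      using vx[of k] that T i by (cases "i = k") (auto simp: subset_iff)
    moreover have "c i < u i \<bullet> vx i" using vx[of i] T i by auto
    ultimately have "(\<Sum>k\<in>T. c i) < (\<Sum>k\<in>T. u i \<bullet> vx k)"
      using i by (intro sum_strict_mono_ex1 finT) auto
    then have "real (card T) * c i < real (card T) * (u i \<bullet> q)" using uq[of i] by simp
    then show ?thesis using cT mult_less_cancel_left_pos by blast
  qed
  ultimately show ?thesis by blast
qed

lemma commuting_facet_reflections_orthogonal:
  assumes N: "N = DIM('a::euclidean_space)" and unit: "\<forall>i\<in>{0..N}. norm (u i) = 1"
    and bnd: "bounded (simplex_of N u c)" and int: "interior (simplex_of N u c) \<noteq> {}"
    and ik: "i \<in> {0..N}" "k \<in> {0..N}" "i \<noteq> k"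
    and comm: "hreflect (u i) (c i) \<circ> hreflect (u k) (c k) = hreflect (u k) (c k) \<circ> hreflect (u i) (c i)"
  shows "u i \<bullet> (u k :: 'a) = 0"
proof -
  obtain p where "p \<in> interior (simplex_of N u c)" using int by blast
  then obtain v :: 'a where "u i \<bullet> v = c i" "c k < u k \<bullet> v"
    using simplex_of_vertex[OF N unit bnd _ ik(2)] ik by blast
  then show ?thesis
    using hreflect_commute_imp_orthogonal[OF _ _ comm] unit ik by force
qed

lemma irreducible_diagram_edge_at_0:
  assumes "irreducible_diagram N u" "N \<ge> 1"
  shows "\<exists>k\<in>{0..N}. k \<noteq> 0 \<and> u 0 \<bullet> u k \<noteq> 0"
proof -
  have "(0, 1) \<in> (diagram_edges N u)\<^sup>*"
    using assms unfolding irreducible_diagram_def by auto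
  then obtain k where "(0, k) \<in> diagram_edges N u"
    by (metis converse_rtranclE zero_neq_one)
  then show ?thesis unfolding diagram_edges_def by auto
qed

lemma finite_positive_perturbation:
  fixes a b :: "'i \<Rightarrow> real"
  assumes "finite T" "\<forall>i\<in>T. 0 < a i"
  shows "\<exists>d>0. \<forall>i\<in>T. \<forall>s. \<bar>s\<bar> \<le> d \<longrightarrow> 0 \<le> a i + s * b i"
proof -
  define d where "d = Min (insert 1 ((\<lambda>i. a i / (\<bar>b i\<bar> + 1)) ` T))"
  have "d > 0" unfolding d_def using assms by simp
  moreover have "0 \<le> a i + s * b i" if i: "i \<in> T" and s: "\<bar>s\<bar> \<le> d" for i s
  proof -
    have "\<bar>s\<bar> \<le> a i / (\<bar>b i\<bar> + 1)" using s i assms(1) unfolding d_def by force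
    then have "\<bar>s\<bar> * \<bar>b i\<bar> \<le> a i / (\<bar>b i\<bar> + 1) * \<bar>b i\<bar>"
      by (rule mult_right_mono) simp
    also have "\<dots> = a i * (\<bar>b i\<bar> / (\<bar>b i\<bar> + 1))" by simp
    also have "\<dots> \<le> a i" by (rule mult_left_le) (use assms(2) i in \<open>auto simp: less_imp_le\<close>)
    finally have "\<bar>s * b i\<bar> \<le> a i" by (simp add: abs_mult)
    then show ?thesis using abs_ge_minus_self[of "s * b i"] by linarith
  qed
  ultimately show ?thesis by blast
qed

lemma affine_hull_face_cut_translate:
  assumes q: "\<forall>i\<in>S. u i \<bullet> q = c i" "\<forall>i\<in>{0..N}-S. c i < u i \<bullet> q"
    and z: "\<forall>i\<in>S. u i \<bullet> z = 0" and y: "y \<in> affine hull (face_cut N u c S)"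
  shows "y + t *\<^sub>R z \<in> affine hull (face_cut N u c S)"
proof -
  obtain d where d: "d > 0"
    "\<forall>i\<in>{0..N}-S. \<forall>s. \<bar>s\<bar> \<le> d \<longrightarrow> 0 \<le> (u i \<bullet> q - c i) + s * (u i \<bullet> z)"
    using finite_positive_perturbation[of "{0..N}-S" "\<lambda>i. u i \<bullet> q - c i" "\<lambda>i. u i \<bullet> z"] q(2)
    by auto
  have face: "q + s *\<^sub>R z \<in> affine hull (face_cut N u c S)" if "\<bar>s\<bar> \<le> d" for s
  proof (rule hull_inc)
    have "c i \<le> u i \<bullet> (q + s *\<^sub>R z)" if i: "i \<in> {0..N}" for i
    proof (cases "i \<in> S")
      case False
      then have "0 \<le> (u i \<bullet> q - c i) + s * (u i \<bullet> z)" using d(2) i \<open>\<bar>s\<bar> \<le> d\<close> by blast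
      then show ?thesis by (simp add: inner_add_right)
    qed (use q(1) z in \<open>simp add: inner_add_right\<close>)
    then show "q + s *\<^sub>R z \<in> face_cut N u c S"
      using q(1) z unfolding face_cut_def simplex_of_def by (simp add: inner_add_right)
  qed
  have "y + (t / (2 * d)) *\<^sub>R ((q + d *\<^sub>R z) - (q + (-d) *\<^sub>R z)) \<in> affine hull (face_cut N u c S)"
    by (rule mem_affine_3_minus[OF affine_affine_hull y face face]) (use d(1) in auto)
  moreover have "(q + d *\<^sub>R z) - (q + (-d) *\<^sub>R z) = (2 * d) *\<^sub>R z"
    by (simp add: scaleR_2 flip: scaleR_add_left)
  ultimately show ?thesis using d(1) by simp
qed

lemma affine_hull_face_cut_subset:
  "affine hull (face_cut N u c S) \<subseteq> {y. \<forall>i\<in>S. u i \<bullet> y = c i}"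
proof (rule hull_minimal)
  show "face_cut N u c S \<subseteq> {y. \<forall>i\<in>S. u i \<bullet> y = c i}" unfolding face_cut_def by auto
  show "affine {y. \<forall>i\<in>S. u i \<bullet> y = c i}"
    unfolding affine_def by (auto simp: inner_add_right) (metis distrib_right mult_1)
qed

lemma affine_hull_pair_param:
  fixes a b :: "'a::real_vector"
  assumes "p \<in> {a, b}" "y \<in> affine hull {a, b}"
  obtains s where "y = p + s *\<^sub>R (b - a)"
proof -
  obtain t where t: "y = a + t *\<^sub>R (b - a)" using assms(2) by (auto simp: affine_hull_2_alt)
  have "y = b + (t - 1) *\<^sub>R (b - a)" using t by (simp add: algebra_simps)
  then show ?thesis using t assms(1) that by blast
qed

lemma affine_hull_pair_point_reflection:
  fixes f :: "'a::real_vector \<Rightarrow> 'a"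
  assumes p: "p \<in> {a, b}" and f: "\<forall>y\<in>affine hull {a, b}. f y = 2 *\<^sub>R p - y"
  shows "f ` (affine hull {a, b}) = affine hull {a, b} \<and> {y \<in> affine hull {a, b}. f y = y} = {p}"
proof -
  let ?L = "affine hull {a, b}"
  have pL: "p \<in> ?L" using p by (auto intro: hull_inc)
  have mirror: "2 *\<^sub>R p - y \<in> ?L" if "y \<in> ?L" for y
    using mem_affine[OF affine_affine_hull pL that, of 2 "-1"] by simp
  have "f ` ?L \<subseteq> ?L" using f mirror by auto
  moreover have "y \<in> f ` ?L" if "y \<in> ?L" for y
  proof (rule image_eqI)
    show "y = f (2 *\<^sub>R p - y)" using f mirror[OF that] by simp
  qed (rule mirror[OF that])
  moreover have "f y = y \<longleftrightarrow> y = p" if "y \<in> ?L" for y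
  proof
    assume "f y = y"
    then have "2 *\<^sub>R (p - y) = 0" using f that by (simp add: scaleR_2 algebra_simps)
    then show "y = p" by simp
  qed (use f that in \<open>simp add: scaleR_2\<close>)
  ultimately show ?thesis using pL by auto
qed

theorem lemma8p7:
  fixes u :: "nat \<Rightarrow> 'a::euclidean_space" and c :: "nat \<Rightarrow> real"
    and S :: "nat \<Rightarrow> nat set" and x :: "nat \<Rightarrow> 'a"
  defines "N \<equiv> DIM('a)"
  assumes simplex: "coxeter_simplex N u c"
    and irred: "irreducible_diagram N u"
    and notA: "\<not> type_A_tilde N u"
    and part: "S 0 \<union> S 1 = {0..N}" "S 0 \<inter> S 1 = {}"
    and comm: "\<forall>j\<in>{0,1}. \<forall>i\<in>S j. \<forall>k\<in>S j.
                 hreflect (u i) (c i) \<circ> hreflect (u k) (c k) = hreflect (u k) (c k) \<circ> hreflect (u i) (c i)"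
    and closest: "x 0 \<in> affine hull (face_cut N u c (S 0))"
                 "x 1 \<in> affine hull (face_cut N u c (S 1))"
                 "\<forall>a\<in>affine hull (face_cut N u c (S 0)). \<forall>b\<in>affine hull (face_cut N u c (S 1)).
                    dist (x 0) (x 1) \<le> dist a b"
  shows "\<forall>j\<in>{0::nat,1}.
           bip_inv u c (S j) ` (affine hull {x 0, x 1}) = affine hull {x 0, x 1}
         \<and> (\<forall>y\<in>affine hull {x 0, x 1}. bip_inv u c (S j) y = 2 *\<^sub>R x j - y)
         \<and> {y\<in>affine hull {x 0, x 1}. bip_inv u c (S j) y = y} = {x j}"
proof
  fix j :: nat assume j: "j \<in> {0, 1}"
  have N: "N = DIM('a)" and N1: "N \<ge> 1" using DIM_positive[where 'a='a] by (simp_all add: N_def)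
  have unit: "\<forall>i\<in>{0..N}. norm (u i) = 1" and bnd: "bounded (simplex_of N u c)"
    and int: "interior (simplex_of N u c) \<noteq> {}"
    using simplex unfolding coxeter_simplex_def by auto
  have Sj: "S j \<subseteq> {0..N}" "finite (S j)" "\<forall>i\<in>S j. norm (u i) = 1"
    using part j unit by (auto intro: finite_subset)
  have orth: "\<forall>i\<in>S j. \<forall>k\<in>S j. i \<noteq> k \<longrightarrow> u i \<bullet> u k = 0"
    using commuting_facet_reflections_orthogonal[OF N unit bnd int] comm j Sj(1) by blast
  have "S j \<noteq> {0..N}"
    using irreducible_diagram_edge_at_0[OF irred N1] orth by fastforce
  then obtain q where "\<forall>i\<in>S j. u i \<bullet> q = c i" "\<forall>i\<in>{0..N}-S j. c i < u i \<bullet> q"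
    using simplex_of_relative_interior_point[OF N unit bnd int, of "{0..N}-S j"] Sj(1)
    by (auto simp: double_diff)
  then have "x j + t *\<^sub>R z \<in> affine hull (face_cut N u c (S j))"
    if "\<forall>i\<in>S j. u i \<bullet> z = 0" for z t
    using affine_hull_face_cut_translate that closest j by blast
  then have perp: "\<forall>z. (\<forall>i\<in>S j. u i \<bullet> z = 0) \<longrightarrow> (x 1 - x 0) \<bullet> z = 0"
    using closest_points_perp[OF closest(3,1,2)] j by blast
  have on_faces: "\<forall>i\<in>S j. u i \<bullet> x j = c i"
    using affine_hull_face_cut_subset closest(1,2) j by blast
  have "\<forall>y\<in>affine hull {x 0, x 1}. bip_inv u c (S j) y = 2 *\<^sub>R x j - y"
  proof
    fix y assume y: "y \<in> affine hull {x 0, x 1}"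
    obtain s where "y = x j + s *\<^sub>R (x 1 - x 0)"
      using affine_hull_pair_param[OF _ y, of "x j"] j by auto
    then show "bip_inv u c (S j) y = 2 *\<^sub>R x j - y"
      using bip_inv_point_reflection[OF Sj(2,3) orth on_faces perp] by (simp add: scaleR_2)
  qed
  then show "bip_inv u c (S j) ` (affine hull {x 0, x 1}) = affine hull {x 0, x 1}
         \<and> (\<forall>y\<in>affine hull {x 0, x 1}. bip_inv u c (S j) y = 2 *\<^sub>R x j - y)
         \<and> {y\<in>affine hull {x 0, x 1}. bip_inv u c (S j) y = y} = {x j}"
    using affine_hull_pair_point_reflection[of "x j" "x 0" "x 1"] j by blast
qed

end
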